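(* Let $(\mathcal A,\mathcal T,(-))$ be a meta-tangible $\mathcal T$-group module triple. Then every nonzero element $c\in\mathcal A$, of height $m_c$, is uniform, i.e. there is $c_{\mathcal T}\in\mathcal T$ such that one of the following holds: (1) $m_c=1$ and $c=c_{\mathcal T}\in\mathcal T$; (2) $m_c=2$ and $c=c_{\mathcal T}^\circ$; (3) $m_c\ge3$, $c=m_cc_{\mathcal T}$ (the $m_c$-fold sum of $c_{\mathcal T}$), and the triple is exceptional, i.e. $(-)$ is of the first kind and $\mathcal A$ has height greater than $2$, and moreover $\mathbf 3\neq\mathbb 1$.
   Context: $(\mathcal A,+,\mathbb 0)$ commutative monoid, $\mathcal T\subseteq\mathcal A\setminus\{\mathbb 0\}$. A negation map is $(-):\mathcal A\to\mathcal A$ with $(-)(b_1+b_2)=(-)b_1+(-)b_2$, $(-)((-)b)=b$, $(-)\mathbb 0=\mathbb 0$, $(-)\mathcal T\subseteq\mathcal T$. Write $b(-)c:=b+((-)c)$, $b^\circ:=b(-)b$, $\mathcal A^\circ=\{b^\circ:b\in\mathcal A\}$. A $\mathcal T$-triple $(\mathcal A,\mathcal T,(-))$: such data with an action $\mathcal T\times\mathcal A\to\mathcal A$ satisfying $a(b_1+b_2)=ab_1+ab_2$, $a\mathbb 0=\mathbb 0$, $(-)(ab)=((-)a)b=a((-)b)$, with $\mathcal T\cap\mathcal A^\circ=\emptyset$ and every element of $\mathcal A$ a finite sum of elements of $\mathcal T$. It is a $\mathcal T$-group module triple if moreover $\mathcal T$ is a group with identity $\mathbb 1$ whose multiplication is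 the restriction of the action, $\mathbb 1b=b$ and $(a_1a_2)b=a_1(a_2b)$. Meta-tangible: $a+b\in\mathcal T$ for all $a,b\in\mathcal T$ with $b\neq(-)a$. $(-)$ is of the first kind if $(-)a=a$ for all $a\in\mathcal T$. $\mathbf 3=\mathbb 1+\mathbb 1+\mathbb 1$. Height of $c$: least $t$ with $c=\sum_{i=1}^ta_i$, $a_i\in\mathcal T$; height of $\mathcal A$: supremum over its elements. *)

theory Defs
  imports Main
begin

text \<open>The monoid (A,+,0) is the whole type 'a (class comm_monoid_add).
  T is a subset, neg the negation map, act the action T x A -> A
  (given as a total function, constrained only for first argument in T),
  one the identity of the group T.\<close>

definition negation_map :: "'a::comm_monoid_add set \<Rightarrow> ('a \<Rightarrow> 'a) \<Rightarrow> bool" where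
  "negation_map T neg \<longleftrightarrow>
     (\<forall>b1 b2. neg (b1 + b2) = neg b1 + neg b2) \<and>
     (\<forall>b. neg (neg b) = b) \<and> neg 0 = 0 \<and> neg ` T \<subseteq> T"

definition circ :: "('a::comm_monoid_add \<Rightarrow> 'a) \<Rightarrow> 'a \<Rightarrow> 'a" where
  "circ neg b = b + neg b"

definition T_triple :: "'a::comm_monoid_add set \<Rightarrow> ('a \<Rightarrow> 'a) \<Rightarrow> ('a \<Rightarrow> 'a \<Rightarrow> 'a) \<Rightarrow> bool" where
  "T_triple T neg act \<longleftrightarrow>
     T \<subseteq> UNIV - {0} \<and> negation_map T neg \<and>
     (\<forall>a\<in>T. \<forall>b1 b2. act a (b1 + b2) = act a b1 + act a b2) \<and>
     (\<forall>a\<in>T. act a 0 = 0) \<and>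
     (\<forall>a\<in>T. \<forall>b. neg (act a b) = act (neg a) b \<and> act (neg a) b = act a (neg b)) \<and>
     T \<inter> range (circ neg) = {} \<and>
     (\<forall>c. \<exists>xs. set xs \<subseteq> T \<and> c = sum_list xs)"

definition T_group_module_triple ::
  "'a::comm_monoid_add set \<Rightarrow> ('a \<Rightarrow> 'a) \<Rightarrow> ('a \<Rightarrow> 'a \<Rightarrow> 'a) \<Rightarrow> 'a \<Rightarrow> bool" where
  "T_group_module_triple T neg act one \<longleftrightarrow>
     T_triple T neg act \<and>
     one \<in> T \<and>
     (\<forall>a1\<in>T. \<forall>a2\<in>T. act a1 a2 \<in> T) \<and>
     (\<forall>a\<in>T. act one a = a \<and> act a one = a) \<and>
     (\<forall>a\<in>T. \<exists>a'\<in>T. act a a' = one \<and> act a' a = one) \<and>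
     (\<forall>b. act one b = b) \<and>
     (\<forall>a1\<in>T. \<forall>a2\<in>T. \<forall>b. act (act a1 a2) b = act a1 (act a2 b))"

definition meta_tangible :: "'a::comm_monoid_add set \<Rightarrow> ('a \<Rightarrow> 'a) \<Rightarrow> bool" where
  "meta_tangible T neg \<longleftrightarrow> (\<forall>a\<in>T. \<forall>b\<in>T. b \<noteq> neg a \<longrightarrow> a + b \<in> T)"

definition first_kind :: "'a set \<Rightarrow> ('a \<Rightarrow> 'a) \<Rightarrow> bool" where
  "first_kind T neg \<longleftrightarrow> (\<forall>a\<in>T. neg a = a)"

definition height :: "'a::comm_monoid_add set \<Rightarrow> 'a \<Rightarrow> nat" where
  "height T c = (LEAST t. \<exists>xs. length xs = t \<and> set xs \<subseteq> T \<and> sum_list xs = c)"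

text \<open>Height of A (supremum of the heights of its elements) is greater than 2
  iff some element has height greater than 2.\<close>
definition height_gt_2 :: "'a::comm_monoid_add set \<Rightarrow> bool" where
  "height_gt_2 T \<longleftrightarrow> (\<exists>c. height T c > 2)"

definition nsum :: "nat \<Rightarrow> 'a::comm_monoid_add \<Rightarrow> 'a" where
  "nsum m a = sum_list (replicate m a)"

end

theory Submission imports Defs "HOL-Library.Multiset"
begin

text \<open>Write c as a sum of m = height c tangible elements. If two summands a, b with
  b \<noteq> (-)a occurred, meta-tangibility would merge them into the single tangible element
  a + b and shorten the sum; so any two summands are negatives of each other. For m = 2 this
  gives c = a(-)a. For m \<ge> 3 each summand is the negative of two others, which forces all
  summands to equal one a with (-)a = a; translating a through the group T shows that (-) is
  of the first kind, and \<open>3 = 1\<close> would give a + a + a = a, shortening c = m a.\<close>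

lemma height_le_length:
  assumes "set xs \<subseteq> T"
  shows "height T (sum_list xs) \<le> length xs"
  unfolding height_def by (rule Least_le) (use assms in blast)

lemma height_nsum_le:
  assumes "a \<in> T"
  shows "height T (nsum n a) \<le> n"
  using height_le_length[of "replicate n a" T] assms unfolding nsum_def
  by (simp add: set_replicate_conv_if)

lemma height_le_size_mset:
  assumes "set_mset M \<subseteq> T"
  shows "height T (sum_mset M) \<le> size M"
proof -
  obtain xs where "mset xs = M" using ex_mset by blast
  then show ?thesis
    using height_le_length[of xs T] assms by (metis set_mset_mset size_mset sum_mset_sum_list)
qed

lemma T_triple_height_decomposition:
  assumes "T_triple T neg act"
  obtains xs where "length xs = height T c" "set xs \<subseteq> T" "sum_list xs = c"
proof -
  have "\<exists>t xs. length xs = t \<and> set xs \<subseteq> T \<and> sum_list xs = c"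
    using assms unfolding T_triple_def by metis
  from LeastI_ex[OF this] show ?thesis
    using that unfolding height_def by blast
qed

lemma meta_tangible_minimal_summands_negate:
  assumes "meta_tangible T neg" "set_mset M \<subseteq> T" "size M = height T (sum_mset M)"
    and M: "M = add_mset a (add_mset b R)"
  shows "b = neg a"
proof (rule ccontr)
  assume "b \<noteq> neg a"
  moreover have "a \<in> T" "b \<in> T"
    using assms(2) M by auto
  ultimately have "a + b \<in> T"
    using assms(1) unfolding meta_tangible_def by blast
  then have "set_mset (add_mset (a + b) R) \<subseteq> T"
    using assms(2) M by auto
  from height_le_size_mset[OF this] have "height T (sum_mset M) \<le> size R + 1"
    using M by (simp add: add.assoc)
  then show False
    using assms(3) M by simp
qed

lemma pairwise_negated_multiset_constant:
  assumes invol: "\<And>x. neg (neg x) = x"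
    and pairs: "\<And>x y R. M = add_mset x (add_mset y R) \<Longrightarrow> y = neg x"
    and "size M \<ge> 3" "a \<in># M"
  shows "neg a = a" "set_mset M \<subseteq> {a}"
proof -
  define M1 where "M1 = M - {#a#}"
  have M: "M = add_mset a M1"
    unfolding M1_def using assms(4) by (rule insert_DiffM[symmetric])
  obtain b R where M1: "M1 = add_mset b R"
    using assms(3) M by (cases M1) auto
  obtain d S where R: "R = add_mset d S"
    using assms(3) M M1 by (cases R) auto
  have "b = neg a" "d = neg a" "d = neg b"
    using pairs[of a b] pairs[of a d] pairs[of b d] M M1 R by (auto simp: add_mset_commute)
  then show na: "neg a = a"
    using invol by metis
  show "set_mset M \<subseteq> {a}"
  proof
    fix x assume "x \<in># M"
    then show "x \<in> {a}"
    proof (cases "x = a")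
      case False
      then have "M1 = add_mset x (M1 - {#x#})"
        using \<open>x \<in># M\<close> M by (simp add: insert_DiffM)
      then show ?thesis
        using pairs[of a x] M na by simp
    qed simp
  qed
qed

lemma meta_tangible_minimal_decomposition_constant:
  assumes "negation_map T neg" "meta_tangible T neg"
    and "set xs \<subseteq> T" "length xs = height T (sum_list xs)" "length xs \<ge> 3"
  obtains a where "a \<in> T" "neg a = a" "xs = replicate (length xs) a"
proof -
  obtain a where a: "a \<in># mset xs"
    using assms(5) by (cases xs) auto
  have "\<And>x. neg (neg x) = x"
    using assms(1) unfolding negation_map_def by blast
  moreover have "\<And>x y R. mset xs = add_mset x (add_mset y R) \<Longrightarrow> y = neg x"
    using meta_tangible_minimal_summands_negate[OF assms(2), of "mset xs"] assms(3,4)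
    by (metis set_mset_mset size_mset sum_mset_sum_list)
  ultimately have "neg a = a" "set xs \<subseteq> {a}"
    using pairwise_negated_multiset_constant[of neg "mset xs" a] a assms(5) by simp_all
  moreover have "a \<in> T"
    using a assms(3) by auto
  ultimately show ?thesis
    using that by (metis replicate_length_same singletonD subsetD)
qed

text \<open>Every t \<in> T is a translate x a of a, and (-) commutes with the action.\<close>
lemma group_module_first_kind_if_tangible_fixed_point:
  assumes "T_group_module_triple T neg act one" "a \<in> T" "neg a = a"
  shows "first_kind T neg"
  unfolding first_kind_def
proof
  fix t assume t: "t \<in> T"
  obtain a' where a': "a' \<in> T" "act a' a = one"
    using assms(1,2) unfolding T_group_module_triple_def by blast
  define x where "x = act t a'"
  have "x \<in> T" "act x a = t"
    using assms(1,2) t a' unfolding x_def T_group_module_triple_def by auto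
  moreover have "\<forall>x\<in>T. \<forall>b. neg (act x b) = act x (neg b)"
    using assms(1) unfolding T_group_module_triple_def T_triple_def by metis
  ultimately show "neg t = t"
    using assms(3) by metis
qed

lemma group_module_three_times_eq:
  assumes "T_group_module_triple T neg act one" "one + one + one = one" "a \<in> T"
  shows "a + a + a = a"
proof -
  have "act a (one + one + one) = a + a + a"
    using assms(1,3) unfolding T_group_module_triple_def T_triple_def by simp
  then show ?thesis
    using assms unfolding T_group_module_triple_def by simp
qed

lemma nsum_add_two_eq_if_triple_eq:
  assumes "a + a + a = a" "m \<ge> 1"
  shows "nsum (m + 2) a = nsum m a"
proof -
  obtain k where k: "m = Suc k" using assms(2) by (metis Suc_le_D One_nat_def)
  have "nsum (m + 2) a = (a + a + a) + nsum k a"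
    unfolding nsum_def k by (simp add: add.assoc)
  also have "\<dots> = nsum m a"
    unfolding assms(1) nsum_def k by simp
  finally show ?thesis .
qed

text \<open>With \<open>3 = 1\<close>, two copies of a can be dropped from m a, contradicting minimality.\<close>
lemma group_module_three_ne_one:
  assumes "T_group_module_triple T neg act one" "a \<in> T"
    and "height T (nsum m a) = m" "m \<ge> 3"
  shows "one + one + one \<noteq> one"
proof
  assume "one + one + one = one"
  define k where "k = m - 2"
  have m: "m = k + 2" "k \<ge> 1"
    using assms(4) unfolding k_def by simp_all
  have "nsum (k + 2) a = nsum k a"
    using group_module_three_times_eq[OF assms(1) \<open>one + one + one = one\<close> assms(2)] m(2)
    by (rule nsum_add_two_eq_if_triple_eq)
  then have "height T (nsum m a) \<le> k"
    using height_nsum_le[OF assms(2), of k] unfolding m(1) by simp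
  with assms(3) show False
    unfolding m(1) by simp
qed

theorem theorem7p28:
  fixes T :: "'a::comm_monoid_add set" and neg :: "'a \<Rightarrow> 'a"
    and act :: "'a \<Rightarrow> 'a \<Rightarrow> 'a" and one :: 'a and c :: 'a
  assumes "T_group_module_triple T neg act one"
    and "meta_tangible T neg"
    and "c \<noteq> 0"
  shows "\<exists>cT\<in>T.
     (height T c = 1 \<and> c = cT) \<or>
     (height T c = 2 \<and> c = circ neg cT) \<or>
     (height T c \<ge> 3 \<and> c = nsum (height T c) cT \<and>
        first_kind T neg \<and> height_gt_2 T \<and> one + one + one \<noteq> one)"
proof -
  have triple: "T_triple T neg act"
    using assms(1) unfolding T_group_module_triple_def by blast
  obtain xs where xs: "length xs = height T c" "set xs \<subseteq> T" "sum_list xs = c"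
    using T_triple_height_decomposition[OF triple] .
  have "xs \<noteq> []"
    using xs(3) assms(3) by auto
  then consider (one) x where "xs = [x]" | (two) a b where "xs = [a, b]"
    | (more) x y z zs where "xs = x # y # z # zs"
    by (metis list.exhaust)
  then show ?thesis
  proof cases
    case one
    then show ?thesis using xs by auto
  next
    case two
    then have "b = neg a"
      using meta_tangible_minimal_summands_negate[OF assms(2), of "{#a, b#}" a b "{#}"] xs by auto
    then show ?thesis using two xs by (auto simp: circ_def)
  next
    case more
    then have long: "length xs \<ge> 3"
      by simp
    obtain a where a: "a \<in> T" "neg a = a" and c: "c = nsum (height T c) a"
      using meta_tangible_minimal_decomposition_constant[OF _ assms(2) xs(2) _ long] triple xs
      unfolding T_triple_def nsum_def by metis
    have m3: "height T c \<ge> 3"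
      using long xs(1) by simp
    have "height T (nsum (height T c) a) = height T c"
      by (simp only: c[symmetric])
    then have "one + one + one \<noteq> one"
      using group_module_three_ne_one[OF assms(1) a(1) _ m3] by blast
    moreover have "height_gt_2 T"
      unfolding height_gt_2_def using m3 by (intro exI[of _ c]) simp
    ultimately show ?thesis
      using a(1) c m3 group_module_first_kind_if_tangible_fixed_point[OF assms(1) a] by blast
  qed
qed

end
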